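(* Let $G$ be a group with a finite generating set $S$, let $X=\mathrm{Cay}(G,S)$, and let $B_X(n)$ be the ball of radius $n$ around the identity in $X$. Suppose there are real numbers $c,k$ such that $|B_X(n)|< c\,n^k$ for every positive integer $n$. Then $\mathrm{pdim}(G)\leq k$.
   Context: For a group $G$, $\mathcal M(G)$ denotes the set of symmetric probability measures $\mu$ on $G$, i.e. $\mu(g)=\mu(g^{-1})$ for all $g$. For $\mu\in\mathcal M(G)$ and $\lambda>0$, $G^\mu(\lambda)$ is the random multigraph with vertex set $G$ in which the number of parallel edges between distinct $g,h\in G$ is an independent Poisson random variable with mean $\lambda\mu(g^{-1}h)$. Define $\lambda_c(\mu):=\sup\{\lambda : \Pr(G^\mu(\lambda)\text{ has an infinite component})=0\}$ (one always has $\lambda_c(\mu)\ge 1$). Fix a finite generating set $S$ of $G$ and let $|g|$ be the word length of $g$ (graph distance from $g$ to the identity in $\mathrm{Cay}(G,S)$). For $s,b>0$ let $\mathcal M_s^b(G):=\{\mu\in\mathcal M(G) : \mu(g)<b|g|^{-s}\text{ for all }g\in G\}$ (with $|e|^{-s}=\infty$). The percolation dimension is $\mathrm{pdim}(G):=\sup\{s : \exists b>0 \text{ such that } \inf_{\mu\in\mathcal M_s^b(G)}\lambda_c(\mu)=1\}$, i.e. the supremum of those $s$ for which, for some $b$, there is a sequence $\mu_i\in\mathcal M_s^b(G)$ with $\lambda_c(\mu_i)\to 1$. This value does not depend on the choice of $S$. *)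

theory Defs
  imports "HOL-Analysis.Analysis" "HOL-Probability.Probability"
begin

text \<open>The group G is the universe of a type of class group_add (written additively,
  not assumed commutative): product gh is g + h, inverse is -g, identity is 0.\<close>

definition sym_gens :: "'a::group_add set \<Rightarrow> 'a set" where
  "sym_gens S = S \<union> uminus ` S"

definition generates :: "'a::group_add set \<Rightarrow> bool" where
  "generates S \<longleftrightarrow> (\<forall>g. \<exists>xs. set xs \<subseteq> sym_gens S \<and> sum_list xs = g)"

text \<open>Word length = graph distance from the identity in Cay(G,S).\<close>
definition word_length :: "'a::group_add set \<Rightarrow> 'a \<Rightarrow> nat" where
  "word_length S g = (LEAST n. \<exists>xs. length xs = n \<and> set xs \<subseteq> sym_gens S \<and> sum_list xs = g)"

definition ball_cay :: "'a::group_add set \<Rightarrow> nat \<Rightarrow> 'a set" where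
  "ball_cay S n = {g. word_length S g \<le> n}"

definition sym_prob :: "('a::group_add \<Rightarrow> real) \<Rightarrow> bool" where
  "sym_prob \<mu> \<longleftrightarrow> (\<forall>g. 0 \<le> \<mu> g) \<and> (\<mu> has_sum 1) UNIV \<and> (\<forall>g. \<mu> g = \<mu> (- g))"

definition edge_pairs :: "'a set set" where
  "edge_pairs = {e. \<exists>g h. g \<noteq> h \<and> e = {g, h}}"

text \<open>Mean of the Poisson number of edges between g and h: lam * mu(g^-1 h)
  (well defined on unordered pairs by symmetry of mu).\<close>
definition pair_rate :: "('a::group_add \<Rightarrow> real) \<Rightarrow> real \<Rightarrow> 'a set \<Rightarrow> real" where
  "pair_rate \<mu> lam e = (THE r. \<exists>g h. g \<noteq> h \<and> e = {g, h} \<and> r = lam * \<mu> (- g + h))"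

text \<open>Poisson distribution with mean r \<ge> 0 (mean 0 = point mass at 0).\<close>
definition poisson0 :: "real \<Rightarrow> nat pmf" where
  "poisson0 r = (if 0 < r then poisson_pmf r else return_pmf 0)"

text \<open>Law of the random multigraph G^mu(lam): independent edge multiplicities.\<close>
definition rand_graph :: "('a::group_add \<Rightarrow> real) \<Rightarrow> real \<Rightarrow> ('a set \<Rightarrow> nat) measure" where
  "rand_graph \<mu> lam = (\<Pi>\<^sub>M e\<in>edge_pairs. measure_pmf (poisson0 (pair_rate \<mu> lam e)))"

definition adj :: "('a set \<Rightarrow> nat) \<Rightarrow> ('a \<times> 'a) set" where
  "adj \<omega> = {(g, h). g \<noteq> h \<and> 0 < \<omega> {g, h}}"

definition has_inf_component :: "('a set \<Rightarrow> nat) \<Rightarrow> bool" where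
  "has_inf_component \<omega> \<longleftrightarrow> (\<exists>g. infinite {h. (g, h) \<in> (adj \<omega>)\<^sup>*})"

definition lambda_c :: "('a::group_add \<Rightarrow> real) \<Rightarrow> ereal" where
  "lambda_c \<mu> = Sup {ereal lam | lam. 0 < lam \<and>
     measure (rand_graph \<mu> lam) {\<omega> \<in> space (rand_graph \<mu> lam). has_inf_component \<omega>} = 0}"

definition M_sb :: "'a::group_add set \<Rightarrow> real \<Rightarrow> real \<Rightarrow> ('a \<Rightarrow> real) set" where
  "M_sb S s b = {\<mu>. sym_prob \<mu> \<and>
     (\<forall>g. g \<noteq> 0 \<longrightarrow> \<mu> g < b * real (word_length S g) powr (- s))}"

definition pdim :: "'a::group_add set \<Rightarrow> ereal" where
  "pdim S = Sup {ereal s | s. 0 < s \<and> (\<exists>b>0. (INF \<mu>\<in>M_sb S s b. lambda_c \<mu>) = 1)}"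

end

theory Submission
  imports Defs "HOL-Library.Discrete_Functions"
begin

text \<open>
  Fix s > k and b > 0. Polynomial growth bounds the sums of |g| powr -s' over g \<noteq> 0 for
  every s' > k (split them into dyadic shells 2^i \<le> |g| < 2^(i+1)), so all measures in
  M_s^b put mass at least 1/2 on a fixed ball B(R) and hence have an atom of mass at least
  delta = 1/(2|B(R)|).

  In a random multigraph with independent edges in which the probabilities of the edges at
  any vertex sum to at most Q < 1, the expected number of open self-avoiding paths from a
  vertex is at most 1/(1 - Q), so all clusters are almost surely finite. For G^mu(lambda)
  these sums are sums of 1 - exp(-lambda mu(g)) over g \<noteq> 0, and an atom of mass delta keeps
  them below lambda - (delta - 1 + exp(-delta)). Thus lambda_c(mu) is at least
  1 + (delta - 1 + exp(-delta))/2 uniformly on M_s^b, so s does not count towards pdim.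
\<close>

section \<open>Open self-avoiding paths\<close>

fun path_edges :: "'a \<Rightarrow> 'a list \<Rightarrow> 'a set set" where
  "path_edges v [] = {}"
| "path_edges v (h # ys) = insert {v, h} (path_edges h ys)"

definition simple_paths :: "'a \<Rightarrow> 'a set \<Rightarrow> 'a list set" where
  "simple_paths v F = {xs. set xs \<subseteq> F \<and> distinct (v # xs)}"

definition open_path :: "('a set \<Rightarrow> nat) \<Rightarrow> 'a \<Rightarrow> 'a list \<Rightarrow> bool" where
  "open_path \<omega> v xs \<longleftrightarrow> (\<forall>e\<in>path_edges v xs. 0 < \<omega> e)"

definition open_paths :: "('a set \<Rightarrow> nat) \<Rightarrow> 'a \<Rightarrow> 'a set \<Rightarrow> 'a list set" where
  "open_paths \<omega> v F = {xs \<in> simple_paths v F. open_path \<omega> v xs}"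

lemma finite_path_edges [simp]: "finite (path_edges v xs)"
  by (induction xs arbitrary: v) auto

lemma path_edges_subset: "e \<in> path_edges v xs \<Longrightarrow> e \<subseteq> set (v # xs)"
  by (induction xs arbitrary: v) auto

lemma path_edges_subset_edge_pairs: "distinct (v # xs) \<Longrightarrow> path_edges v xs \<subseteq> edge_pairs"
  by (induction xs arbitrary: v) (auto simp: edge_pairs_def)

lemma path_edges_snoc: "path_edges v (xs @ [y]) = insert {last (v # xs), y} (path_edges v xs)"
  by (induction xs arbitrary: v) auto

lemma path_edges_append: "path_edges v xs \<subseteq> path_edges v (xs @ ys)"
  by (induction xs arbitrary: v) auto

lemma prod_path_edges_Cons:
  assumes "distinct (v # h # ys)"
  shows "(\<Prod>e\<in>path_edges v (h # ys). q e) = q {v, h} * (\<Prod>e\<in>path_edges h ys. q e)"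
proof -
  have "{v, h} \<notin> path_edges h ys"
    using assms path_edges_subset[of "{v, h}" h ys] by auto
  then show ?thesis by simp
qed

lemma finite_simple_paths:
  assumes "finite F"
  shows "finite (simple_paths v F)"
proof (rule finite_subset)
  show "simple_paths v F \<subseteq> {xs. set xs \<subseteq> F \<and> length xs \<le> card F}"
    using assms by (auto simp: simple_paths_def dest: card_mono simp flip: distinct_card)
  show "finite {xs. set xs \<subseteq> F \<and> length xs \<le> card F}"
    using assms by (rule finite_lists_length_le)
qed

lemma simple_paths_unfold:
  assumes "v \<notin> F"
  shows "simple_paths v F = insert [] ((\<lambda>(h, ys). h # ys) ` (SIGMA h:F. simple_paths h (F - {h})))"
proof (intro equalityI subsetI)
  fix xs assume "xs \<in> simple_paths v F"
  then show "xs \<in> insert [] ((\<lambda>(h, ys). h # ys) ` (SIGMA h:F. simple_paths h (F - {h})))"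
    by (cases xs) (force simp: simple_paths_def)+
qed (use assms in \<open>auto simp: simple_paths_def\<close>)

lemma sum_weight_simple_paths_le:
  fixes q :: "'a set \<Rightarrow> real"
  assumes q_nonneg: "\<And>e. 0 \<le> q e" and "Q < 1"
    and q_sum_le: "\<And>v F. finite F \<Longrightarrow> v \<notin> F \<Longrightarrow> (\<Sum>h\<in>F. q {v, h}) \<le> Q"
  shows "finite F \<Longrightarrow> v \<notin> F \<Longrightarrow> (\<Sum>xs\<in>simple_paths v F. \<Prod>e\<in>path_edges v xs. q e) \<le> 1 / (1 - Q)"
proof (induction "card F" arbitrary: F v rule: less_induct)
  \<comment> \<open>Peel off the first step; 1/(1 - Q) is the fixed point of x = 1 + Q x.\<close>
  case less
  let ?w = "\<lambda>v xs. \<Prod>e\<in>path_edges v xs. q e"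
  let ?P = "SIGMA h:F. simple_paths h (F - {h})"
  have "inj_on (\<lambda>(h, ys). h # ys) ?P" by (auto simp: inj_on_def)
  moreover have "finite ?P" using less.prems by (auto intro: finite_simple_paths)
  ultimately have "(\<Sum>xs\<in>simple_paths v F. ?w v xs) = 1 + (\<Sum>(h, ys)\<in>?P. ?w v (h # ys))"
    unfolding simple_paths_unfold [OF less.prems(2)] by (subst sum.insert) (auto simp: sum.reindex intro!: sum.cong)
  also have "\<dots> = 1 + (\<Sum>(h, ys)\<in>?P. q {v, h} * ?w h ys)"
    using less.prems(2)
    by (intro arg_cong [where f = "(+) 1"] sum.cong refl)
      (auto simp: simple_paths_def simp del: path_edges.simps intro!: prod_path_edges_Cons)
  also have "\<dots> = 1 + (\<Sum>h\<in>F. q {v, h} * (\<Sum>ys\<in>simple_paths h (F - {h}). ?w h ys))"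
    using less.prems by (subst sum.Sigma [symmetric]) (auto simp: finite_simple_paths sum_distrib_left)
  also have "\<dots> \<le> 1 + (\<Sum>h\<in>F. q {v, h} * (1 / (1 - Q)))"
  proof -
    have "(\<Sum>ys\<in>simple_paths h (F - {h}). ?w h ys) \<le> 1 / (1 - Q)" if "h \<in> F" for h
      using less.hyps [of "F - {h}" h] less.prems that card_Diff1_less [of F h] by simp
    then show ?thesis by (intro add_left_mono sum_mono mult_left_mono) (auto simp: q_nonneg)
  qed
  also have "\<dots> \<le> 1 + Q * (1 / (1 - Q))"
    using q_sum_le [OF less.prems] \<open>Q < 1\<close>
    by (simp flip: sum_divide_distrib add: divide_right_mono)
  also have "\<dots> = 1 / (1 - Q)" using \<open>Q < 1\<close> by (simp add: field_simps)
  finally show ?case .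
qed

lemma finite_open_paths: "finite F \<Longrightarrow> finite (open_paths \<omega> v F)"
  by (simp add: open_paths_def finite_simple_paths)

lemma open_paths_mono: "F \<subseteq> F' \<Longrightarrow> open_paths \<omega> v F \<subseteq> open_paths \<omega> v F'"
  by (auto simp: open_paths_def simple_paths_def)

lemma open_paths_Diff_self: "open_paths \<omega> v (F - {v}) = open_paths \<omega> v F"
  by (auto simp: open_paths_def simple_paths_def)

lemma reachable_imp_open_simple_path:
  assumes "(g, h) \<in> (adj \<omega>)\<^sup>*"
  shows "\<exists>xs. distinct (g # xs) \<and> open_path \<omega> g xs \<and> last (g # xs) = h"
  using assms
proof (induction rule: rtrancl_induct)
  case base
  show ?case by (rule exI [of _ "[]"]) (simp add: open_path_def)
next
  case (step h h')
  then obtain xs where xs: "distinct (g # xs)" "open_path \<omega> g xs" "last (g # xs) = h" by blast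
  show ?case
  proof (cases "h' \<in> set (g # xs)")
    case True
    then obtain ys zs where split: "g # xs = ys @ h' # zs" by (meson split_list)
    show ?thesis
    proof (cases ys)
      case Nil
      then show ?thesis using split by (intro exI [of _ "[]"]) (simp add: open_path_def)
    next
      case (Cons a ys')
      then have "xs = ys' @ h' # zs" using split by simp
      then show ?thesis
        using xs path_edges_append [of g "ys' @ [h']" zs]
        by (intro exI [of _ "ys' @ [h']"]) (auto simp: open_path_def)
    qed
  next
    case False
    then show ?thesis
      using xs step.hyps(2) by (intro exI [of _ "xs @ [h']"]) (auto simp: open_path_def adj_def path_edges_snoc)
  qed
qed

lemma finite_component_if_open_paths_bounded:
  assumes bounded: "\<And>F. finite F \<Longrightarrow> card (open_paths \<omega> g F) \<le> n"
  shows "finite {h. (g, h) \<in> (adj \<omega>)\<^sup>*}"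
proof (rule ccontr)
  assume "infinite {h. (g, h) \<in> (adj \<omega>)\<^sup>*}"
  then obtain A where A: "finite A" "card A = Suc (Suc n)" "A \<subseteq> {h. (g, h) \<in> (adj \<omega>)\<^sup>*}"
    by (meson infinite_arbitrarily_large)
  then obtain path where path:
    "\<And>a. a \<in> A \<Longrightarrow> distinct (g # path a) \<and> open_path \<omega> g (path a) \<and> last (g # path a) = a"
    using reachable_imp_open_simple_path by (metis mem_Collect_eq subsetD)
  define F where "F = (\<Union>a\<in>A. set (path a))"
  let ?ends = "(\<lambda>xs. last (g # xs)) ` open_paths \<omega> g F"
  have "path a \<in> open_paths \<omega> g F" if "a \<in> A" for a
    using path [OF that] that by (auto simp: open_paths_def simple_paths_def F_def)
  then have "A \<subseteq> insert g ?ends"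
    using path by (force simp del: last.simps)
  moreover have fin: "finite (open_paths \<omega> g F)"
    using A(1) by (simp add: F_def finite_open_paths)
  ultimately have "card A \<le> card (insert g ?ends)"
    by (intro card_mono) auto
  also have "\<dots> \<le> Suc (card (open_paths \<omega> g F))"
    using fin card_image_le [OF fin, of "\<lambda>xs. last (g # xs)"] by (simp add: card_insert_if)
  also have "\<dots> \<le> Suc n"
    using A(1) by (simp add: F_def bounded)
  finally show False using A(2) by simp
qed

section \<open>Random multigraphs with independent edges\<close>

definition random_multigraph :: "('a set \<Rightarrow> nat pmf) \<Rightarrow> ('a set \<Rightarrow> nat) measure" where
  "random_multigraph p = (\<Pi>\<^sub>M e\<in>edge_pairs. measure_pmf (p e))"

lemma open_path_event_eq_prod_emb:
  assumes "distinct (g # xs)"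
  shows "{\<omega> \<in> space (random_multigraph p). open_path \<omega> g xs} =
    prod_emb edge_pairs (\<lambda>e. measure_pmf (p e)) (path_edges g xs) (\<Pi>\<^sub>E e\<in>path_edges g xs. {0<..})"
  using path_edges_subset_edge_pairs [OF assms]
  by (auto simp: random_multigraph_def prod_emb_def restrict_PiE_iff open_path_def space_PiM)

lemma sets_open_path_event:
  assumes "distinct (g # xs)"
  shows "{\<omega> \<in> space (random_multigraph p). open_path \<omega> g xs} \<in> sets (random_multigraph p)"
  unfolding open_path_event_eq_prod_emb [OF assms] unfolding random_multigraph_def
  using path_edges_subset_edge_pairs [OF assms]
  by (intro measurable_prod_emb sets_PiM_I_finite) auto

lemma emeasure_open_path_event:
  assumes "distinct (g # xs)"
  shows "emeasure (random_multigraph p) {\<omega> \<in> space (random_multigraph p). open_path \<omega> g xs} =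
    ennreal (\<Prod>e\<in>path_edges g xs. measure_pmf.prob (p e) {0<..})"
proof -
  have "emeasure (random_multigraph p) {\<omega> \<in> space (random_multigraph p). open_path \<omega> g xs} =
      (\<Prod>e\<in>path_edges g xs. emeasure (measure_pmf (p e)) {0<..})"
    unfolding open_path_event_eq_prod_emb [OF assms] unfolding random_multigraph_def
    using path_edges_subset_edge_pairs [OF assms]
    by (intro emeasure_PiM_emb) (auto simp: prob_space_measure_pmf)
  then show ?thesis
    by (simp add: measure_pmf.emeasure_eq_measure prod_ennreal)
qed

lemma card_open_paths_eq_sum_indicator:
  assumes "finite F"
  shows "of_nat (card (open_paths \<omega> g F)) =
    (\<Sum>xs\<in>simple_paths g F. indicator {\<omega>. open_path \<omega> g xs} \<omega> :: ennreal)"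
  using assms by (simp add: indicator_def open_paths_def finite_simple_paths Int_def flip: of_bool_def)

lemma nn_integral_card_open_paths_le:
  assumes "Q < 1"
    and edge_sum: "\<And>v F. finite F \<Longrightarrow> v \<notin> F \<Longrightarrow> (\<Sum>h\<in>F. measure_pmf.prob (p {v, h}) {0<..}) \<le> Q"
    and "finite F" "g \<notin> F"
  shows "(\<integral>\<^sup>+\<omega>. of_nat (card (open_paths \<omega> g F)) \<partial>random_multigraph p) \<le> ennreal (1 / (1 - Q))"
proof -
  let ?M = "random_multigraph p"
  let ?E = "\<lambda>xs. {\<omega> \<in> space ?M. open_path \<omega> g xs}"
  have distinct: "distinct (g # xs)" if "xs \<in> simple_paths g F" for xs
    using that by (simp add: simple_paths_def)
  have "(\<integral>\<^sup>+\<omega>. of_nat (card (open_paths \<omega> g F)) \<partial>?M) =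
      (\<integral>\<^sup>+\<omega>. (\<Sum>xs\<in>simple_paths g F. indicator (?E xs) \<omega>) \<partial>?M)"
    using \<open>finite F\<close> by (intro nn_integral_cong) (simp add: card_open_paths_eq_sum_indicator indicator_def)
  also have "\<dots> = (\<Sum>xs\<in>simple_paths g F. emeasure ?M (?E xs))"
    using sets_open_path_event [OF distinct] by (subst nn_integral_sum) auto
  also have "\<dots> = ennreal (\<Sum>xs\<in>simple_paths g F. \<Prod>e\<in>path_edges g xs. measure_pmf.prob (p e) {0<..})"
    using emeasure_open_path_event [OF distinct]
    by (subst sum_ennreal [symmetric]) (auto intro!: sum.cong prod_nonneg)
  also have "\<dots> \<le> ennreal (1 / (1 - Q))"
    using assms by (intro ennreal_leI sum_weight_simple_paths_le) auto
  finally show ?thesis .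
qed

lemma finite_subset_from_nat_into_atMost:
  assumes "countable A" "finite F" "F \<subseteq> A"
  shows "\<exists>m. F \<subseteq> from_nat_into A ` {..m}"
proof (intro exI subsetI)
  fix x assume "x \<in> F"
  then have "x = from_nat_into A (to_nat_on A x)" "to_nat_on A x \<le> Max (to_nat_on A ` F)"
    using assms by auto
  then show "x \<in> from_nat_into A ` {..Max (to_nat_on A ` F)}" by blast
qed

lemma borel_measurable_card_open_paths:
  assumes "finite F"
  shows "(\<lambda>\<omega>. of_nat (card (open_paths \<omega> g F)) :: ennreal) \<in> borel_measurable (random_multigraph p)"
proof -
  let ?M = "random_multigraph p"
  have "distinct (g # xs)" if "xs \<in> simple_paths g F" for xs
    using that by (simp add: simple_paths_def)
  then have "(\<lambda>\<omega>. \<Sum>xs\<in>simple_paths g F. indicator {\<omega> \<in> space ?M. open_path \<omega> g xs} \<omega> :: ennreal)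
      \<in> borel_measurable ?M"
    by (intro borel_measurable_sum borel_measurable_indicator sets_open_path_event)
  then show ?thesis
    by (rule measurable_cong [THEN iffD1, rotated])
      (simp add: card_open_paths_eq_sum_indicator assms indicator_def)
qed

lemma AE_SUP_card_open_paths_finite:
  assumes "Q < 1"
    and edge_sum: "\<And>v F. finite F \<Longrightarrow> v \<notin> F \<Longrightarrow> (\<Sum>h\<in>F. measure_pmf.prob (p {v, h}) {0<..}) \<le> Q"
    and "incseq F" "\<And>m. finite (F m)" "\<And>m. g \<notin> F m"
  shows "AE \<omega> in random_multigraph p. (SUP m. of_nat (card (open_paths \<omega> g (F m))) :: ennreal) \<noteq> \<infinity>"
proof -
  let ?M = "random_multigraph p"
  define N where "N m \<omega> = (of_nat (card (open_paths \<omega> g (F m))) :: ennreal)" for m \<omega>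
  have N_measurable: "N m \<in> borel_measurable ?M" for m
    unfolding N_def using assms(4) by (rule borel_measurable_card_open_paths)
  have "incseq N"
    using \<open>incseq F\<close> assms(4)
    by (auto simp: N_def incseq_def le_fun_def intro!: card_mono finite_open_paths open_paths_mono)
  then have "(\<integral>\<^sup>+\<omega>. (SUP m. N m \<omega>) \<partial>?M) = (SUP m. \<integral>\<^sup>+\<omega>. N m \<omega> \<partial>?M)"
    by (intro nn_integral_monotone_convergence_SUP N_measurable)
  also have "\<dots> \<le> ennreal (1 / (1 - Q))"
    using assms by (intro SUP_least) (simp add: N_def nn_integral_card_open_paths_le)
  finally show ?thesis
    unfolding N_def by (intro nn_integral_PInf_AE borel_measurable_SUP N_measurable [unfolded N_def])
      (auto simp: top_unique)
qed

lemma AE_open_paths_bounded: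
  assumes "countable (UNIV :: 'a set)" "Q < 1"
    and "\<And>v F. finite F \<Longrightarrow> v \<notin> F \<Longrightarrow> (\<Sum>h\<in>F. measure_pmf.prob (p {v, h}) {0<..}) \<le> Q"
  shows "AE \<omega> in random_multigraph p. \<exists>n. \<forall>F. finite F \<longrightarrow> card (open_paths \<omega> (g :: 'a) F) \<le> n"
proof -
  define F where "F m = from_nat_into (UNIV :: 'a set) ` {..m} - {g}" for m
  have "AE \<omega> in random_multigraph p. (SUP m. of_nat (card (open_paths \<omega> g (F m))) :: ennreal) \<noteq> \<infinity>"
    using assms(2,3) by (rule AE_SUP_card_open_paths_finite) (auto simp: F_def incseq_def)
  then show ?thesis
  proof eventually_elim
    case (elim \<omega>)
    then have "(SUP m. of_nat (card (open_paths \<omega> g (F m))) :: ennreal) < top"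
      by (simp only: infinity_ennreal_def less_top)
    then obtain n where n: "(SUP m. of_nat (card (open_paths \<omega> g (F m))) :: ennreal) < of_nat n"
      using ennreal_Ex_less_of_nat by blast
    have "card (open_paths \<omega> g F') \<le> n" if F': "finite F'" for F'
    proof -
      obtain m where "F' \<subseteq> from_nat_into UNIV ` {..m}"
        using finite_subset_from_nat_into_atMost [OF assms(1) F' subset_UNIV] by auto
      then have "open_paths \<omega> g (F' - {g}) \<subseteq> open_paths \<omega> g (F m)"
        unfolding F_def by (intro open_paths_mono) auto
      then have "card (open_paths \<omega> g F') \<le> card (open_paths \<omega> g (F m))"
        by (intro card_mono finite_open_paths) (auto simp: F_def open_paths_Diff_self)
      moreover have "(of_nat (card (open_paths \<omega> g (F m))) :: ennreal) < of_nat n"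
        by (rule order.strict_trans1 [OF SUP_upper n]) simp
      ultimately show ?thesis by simp
    qed
    then show ?case by blast
  qed
qed

lemma AE_no_inf_component:
  assumes "countable (UNIV :: 'a set)" "Q < 1"
    and "\<And>v F. finite F \<Longrightarrow> v \<notin> F \<Longrightarrow> (\<Sum>h\<in>F. measure_pmf.prob (p {v, h}) {0<..}) \<le> Q"
  shows "AE \<omega> in random_multigraph p. \<not> has_inf_component (\<omega> :: 'a set \<Rightarrow> nat)"
proof -
  have "AE \<omega> in random_multigraph p. \<forall>g\<in>UNIV. \<exists>n. \<forall>F. finite F \<longrightarrow> card (open_paths \<omega> (g :: 'a) F) \<le> n"
    using assms by (intro AE_ball_countable' AE_open_paths_bounded) auto
  then show ?thesis
  proof eventually_elim
    case (elim \<omega>)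
    have "finite {h. (g, h) \<in> (adj \<omega>)\<^sup>*}" for g
    proof -
      obtain n where "\<And>F. finite F \<Longrightarrow> card (open_paths \<omega> g F) \<le> n"
        using elim by blast
      then show ?thesis by (rule finite_component_if_open_paths_bounded)
    qed
    then show ?case by (simp add: has_inf_component_def)
  qed
qed

section \<open>Lower bounds for the critical intensity\<close>

lemma prob_poisson0_pos:
  assumes "0 \<le> r"
  shows "measure_pmf.prob (poisson0 r) {0<..} = 1 - exp (- r)"
proof -
  have "{0<..} = space (measure_pmf (poisson0 r)) - {0}" by auto
  then have "measure_pmf.prob (poisson0 r) {0<..} = 1 - pmf (poisson0 r) 0"
    by (metis measure_pmf.prob_compl measure_pmf_single sets_measure_pmf UNIV_I)
  then show ?thesis
    using assms by (auto simp: poisson0_def)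
qed

lemma pair_rate_doubleton:
  assumes "\<And>g. \<mu> g = \<mu> (- g)" and "u \<noteq> v"
  shows "pair_rate \<mu> lam {u, v} = lam * \<mu> (- u + v)"
  unfolding pair_rate_def
proof (rule the_equality)
  fix r assume "\<exists>g h. g \<noteq> h \<and> {u, v} = {g, h} \<and> r = lam * \<mu> (- g + h)"
  then obtain g h where "{u, v} = {g, h}" "r = lam * \<mu> (- g + h)" by blast
  moreover have "\<mu> (- v + u) = \<mu> (- u + v)"
    using assms(1) [of "- v + u"] by (simp add: minus_add)
  ultimately show "r = lam * \<mu> (- u + v)"
    using \<open>u \<noteq> v\<close> by (auto simp: doubleton_eq_iff)
qed (use assms(2) in blast)

lemma lambda_c_ge:
  fixes \<mu> :: "'a::group_add \<Rightarrow> real"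
  assumes "countable (UNIV :: 'a set)" "sym_prob \<mu>" "0 < lam" "Q < 1"
    and sum_le: "\<And>T. finite T \<Longrightarrow> 0 \<notin> T \<Longrightarrow> (\<Sum>g\<in>T. 1 - exp (- (lam * \<mu> g))) \<le> Q"
  shows "ereal lam \<le> lambda_c \<mu>"
proof -
  let ?p = "\<lambda>e. poisson0 (pair_rate \<mu> lam e)"
  have sym: "\<And>g. \<mu> g = \<mu> (- g)" and nonneg: "\<And>g. 0 \<le> \<mu> g"
    using assms(2) by (auto simp: sym_prob_def)
  have edge_sum: "(\<Sum>h\<in>F. measure_pmf.prob (?p {v, h}) {0<..}) \<le> Q" if "finite F" "v \<notin> F" for v F
  proof -
    have "measure_pmf.prob (?p {v, h}) {0<..} = 1 - exp (- (lam * \<mu> (- v + h)))" if "h \<in> F" for h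
    proof -
      have "v \<noteq> h" using that \<open>v \<notin> F\<close> by auto
      then show ?thesis
        using \<open>0 < lam\<close> nonneg [of "- v + h"] by (simp add: pair_rate_doubleton [of \<mu>, OF sym] prob_poisson0_pos)
    qed
    then have "(\<Sum>h\<in>F. measure_pmf.prob (?p {v, h}) {0<..}) = (\<Sum>h\<in>F. 1 - exp (- (lam * \<mu> (- v + h))))"
      by simp
    also have "\<dots> = (\<Sum>g\<in>(+) (- v) ` F. 1 - exp (- (lam * \<mu> g)))"
      by (simp add: sum.reindex inj_on_def)
    also have "\<dots> \<le> Q"
    proof (rule sum_le)
      show "0 \<notin> (+) (- v) ` F"
        using \<open>v \<notin> F\<close> by (auto simp flip: eq_neg_iff_add_eq_0)
    qed (use that in simp)
    finally show ?thesis .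
  qed
  have "AE \<omega> in rand_graph \<mu> lam. \<not> has_inf_component \<omega>"
    unfolding rand_graph_def random_multigraph_def [symmetric]
    using assms(1,4) edge_sum by (rule AE_no_inf_component)
  then have "measure (rand_graph \<mu> lam) {\<omega> \<in> space (rand_graph \<mu> lam). has_inf_component \<omega>} = 0"
    by (simp add: measure_def emeasure_eq_0_AE)
  then show ?thesis
    unfolding lambda_c_def using \<open>0 < lam\<close> by (intro Sup_upper) blast
qed

lemma diff_one_add_exp_minus_mono:
  fixes x y :: real
  assumes "0 \<le> x" "x \<le> y"
  shows "x - 1 + exp (- x) \<le> y - 1 + exp (- y)"
proof -
  have "exp (- x) - exp (- y) = exp (- x) * (1 - exp (- (y - x)))"
    by (simp add: algebra_simps flip: exp_add)
  also have "\<dots> \<le> 1 - exp (- (y - x))"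
    using assms by (intro mult_left_le_one_le) auto
  also have "\<dots> \<le> y - x"
    using exp_minus_ge [of "y - x"] by simp
  finally show ?thesis by simp
qed

text \<open>
  Each term 1 - exp(-x) is at most x, and the atom g0 loses the defect x - 1 + exp(-x).
  Adding g0 to T only increases the left-hand side, so g0 need not lie in T; in
  particular it may be the identity, which carries no edges.
\<close>
lemma sum_one_minus_exp_le_if_atom:
  fixes \<mu> :: "'a \<Rightarrow> real"
  assumes \<mu>_nonneg: "\<And>g. 0 \<le> \<mu> g" and "(\<mu> has_sum 1) UNIV"
    and "0 < \<delta>" "\<delta> \<le> \<mu> g\<^sub>0" "1 \<le> lam" "finite T"
  shows "(\<Sum>g\<in>T. 1 - exp (- (lam * \<mu> g))) \<le> lam - (\<delta> - 1 + exp (- \<delta>))"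
proof -
  let ?\<phi> = "\<lambda>g. 1 - exp (- (lam * \<mu> g))"
  let ?T = "insert g\<^sub>0 T"
  have \<phi>_le: "?\<phi> g \<le> lam * \<mu> g" for g
    using exp_minus_ge [of "lam * \<mu> g"] by simp
  have "sum ?\<phi> T \<le> sum ?\<phi> ?T"
    using \<open>finite T\<close> \<open>1 \<le> lam\<close> \<mu>_nonneg by (intro sum_mono2) auto
  also have "\<dots> = ?\<phi> g\<^sub>0 + sum ?\<phi> (?T - {g\<^sub>0})"
    using \<open>finite T\<close> by (intro sum.remove) auto
  also have "\<dots> \<le> ?\<phi> g\<^sub>0 + lam * sum \<mu> (?T - {g\<^sub>0})"
    by (simp add: sum_distrib_left sum_mono \<phi>_le)
  also have "\<dots> = lam * sum \<mu> ?T - (lam * \<mu> g\<^sub>0 - 1 + exp (- (lam * \<mu> g\<^sub>0)))"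
    using sum.remove [of ?T g\<^sub>0 \<mu>] \<open>finite T\<close> by (simp add: algebra_simps)
  also have "\<dots> \<le> lam - (\<delta> - 1 + exp (- \<delta>))"
  proof -
    have "lam * sum \<mu> ?T \<le> lam"
      using finite_sum_le_has_sum [OF assms(2)] \<mu>_nonneg \<open>finite T\<close> \<open>1 \<le> lam\<close>
      by (simp add: mult_left_le)
    moreover have "\<delta> \<le> lam * \<mu> g\<^sub>0"
      using mult_right_mono [OF \<open>1 \<le> lam\<close> \<mu>_nonneg, of g\<^sub>0] \<open>\<delta> \<le> \<mu> g\<^sub>0\<close> by simp
    then have "\<delta> - 1 + exp (- \<delta>) \<le> lam * \<mu> g\<^sub>0 - 1 + exp (- (lam * \<mu> g\<^sub>0))"
      using \<open>0 < \<delta>\<close> by (intro diff_one_add_exp_minus_mono) auto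
    ultimately show ?thesis by simp
  qed
  finally show ?thesis .
qed

lemma lambda_c_ge_if_atom:
  fixes \<mu> :: "'a::group_add \<Rightarrow> real"
  assumes "countable (UNIV :: 'a set)" "sym_prob \<mu>" "0 < \<delta>" "\<delta> \<le> \<mu> g\<^sub>0"
  shows "ereal (1 + (\<delta> - 1 + exp (- \<delta>)) / 2) \<le> lambda_c \<mu>"
proof -
  define \<eta> where "\<eta> = \<delta> - 1 + exp (- \<delta>)"
  have "0 < \<eta>"
    using exp_minus_greater [of \<delta>] \<open>0 < \<delta>\<close> by (simp add: \<eta>_def)
  have "ereal (1 + \<eta> / 2) \<le> lambda_c \<mu>"
  proof (rule lambda_c_ge [OF assms(1,2)])
    show "0 < 1 + \<eta> / 2" "1 + \<eta> / 2 - \<eta> < 1"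
      using \<open>0 < \<eta>\<close> by simp_all
    show "(\<Sum>g\<in>T. 1 - exp (- ((1 + \<eta> / 2) * \<mu> g))) \<le> 1 + \<eta> / 2 - \<eta>" if "finite T" for T
      unfolding \<eta>_def using assms(2-4) \<open>0 < \<eta>\<close> that
      by (intro sum_one_minus_exp_le_if_atom) (auto simp: sym_prob_def \<eta>_def)
  qed
  then show ?thesis by (simp add: \<eta>_def)
qed

section \<open>Polynomial growth forces atoms\<close>

lemma word_length_witness:
  assumes "generates S"
  shows "\<exists>xs. length xs = word_length S g \<and> set xs \<subseteq> sym_gens S \<and> sum_list xs = g"
proof -
  obtain xs where "set xs \<subseteq> sym_gens S" "sum_list xs = g"
    using assms by (auto simp: generates_def)
  then have "\<exists>n xs. length xs = n \<and> set xs \<subseteq> sym_gens S \<and> sum_list xs = g"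
    by blast
  then show ?thesis
    unfolding word_length_def by (rule LeastI_ex)
qed

lemma word_length_zero [simp]: "word_length S 0 = 0"
  unfolding word_length_def by (intro Least_eq_0) (rule exI [of _ "[]"], simp)

lemma word_length_eq_0_iff:
  assumes "generates S"
  shows "word_length S g = 0 \<longleftrightarrow> g = 0"
  using word_length_witness [OF assms, of g] by auto

lemma finite_ball_cay:
  assumes "finite S" "generates S"
  shows "finite (ball_cay S n)"
proof (rule finite_subset)
  show "ball_cay S n \<subseteq> sum_list ` {xs. set xs \<subseteq> sym_gens S \<and> length xs \<le> n}"
  proof
    fix g assume "g \<in> ball_cay S n"
    moreover obtain xs where "length xs = word_length S g" "set xs \<subseteq> sym_gens S" "sum_list xs = g"
      using word_length_witness [OF assms(2)] by blast
    ultimately show "g \<in> sum_list ` {xs. set xs \<subseteq> sym_gens S \<and> length xs \<le> n}"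
      by (auto simp: ball_cay_def intro!: image_eqI [of g _ xs])
  qed
  show "finite (sum_list ` {xs. set xs \<subseteq> sym_gens S \<and> length xs \<le> n})"
    using assms(1) by (simp add: sym_gens_def finite_lists_length_le)
qed

lemma countable_UNIV_if_generates:
  fixes S :: "'a::group_add set"
  assumes "finite S" "generates S"
  shows "countable (UNIV :: 'a set)"
proof (rule countable_subset)
  show "UNIV \<subseteq> sum_list ` lists (sym_gens S)"
  proof
    fix g :: 'a
    obtain xs where "set xs \<subseteq> sym_gens S" "sum_list xs = g"
      using assms(2) by (auto simp: generates_def)
    then show "g \<in> sum_list ` lists (sym_gens S)" by (auto intro!: image_eqI [of g _ xs])
  qed
  show "countable (sum_list ` lists (sym_gens S))"
    using assms(1) by (simp add: sym_gens_def countable_finite)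
qed

lemma sum_word_length_powr_dyadic_shell_le:
  fixes S :: "'a::group_add set" and c k s :: real
  assumes "finite S" "generates S"
    and growth: "\<And>n::nat. 0 < n \<Longrightarrow> real (card (ball_cay S n)) < c * real n powr k"
    and "0 \<le> s" "finite T" "0 \<notin> T"
  shows "(\<Sum>g\<in>{g\<in>T. floor_log (word_length S g) = i}. real (word_length S g) powr - s)
    \<le> c * 2 powr k * (2 powr (k - s)) ^ i"
proof -
  let ?shell = "{g\<in>T. floor_log (word_length S g) = i}"
  have "real (word_length S g) powr - s \<le> 2 powr (- s * i)" if "g \<in> ?shell" for g
  proof -
    have "word_length S g \<noteq> 0"
      using that \<open>0 \<notin> T\<close> word_length_eq_0_iff [OF assms(2)] by auto
    then have "2 ^ i \<le> word_length S g"
      using that floor_log_exp2_le [of "word_length S g"] by auto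
    then have "2 powr i \<le> real (word_length S g)"
      by (simp add: powr_realpow)
    then have "real (word_length S g) powr - s \<le> (2 powr i) powr - s"
      using \<open>0 \<le> s\<close> by (intro powr_mono2') auto
    then show ?thesis by (simp add: powr_powr mult.commute)
  qed
  then have "(\<Sum>g\<in>?shell. real (word_length S g) powr - s) \<le> card ?shell * 2 powr (- s * i)"
    by (rule sum_bounded_above)
  also have "card ?shell \<le> card (ball_cay S (2 ^ (i + 1)))"
    using floor_log_exp2_gt by (intro card_mono finite_ball_cay assms(1,2)) (auto simp: ball_cay_def less_imp_le)
  then have "real (card ?shell) * 2 powr (- s * i) \<le> c * real (2 ^ (i + 1)) powr k * 2 powr (- s * i)"
    using growth [of "2 ^ (i + 1)"] by (intro mult_right_mono) auto
  also have "\<dots> = c * 2 powr k * (2 powr (k - s)) ^ i"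
  proof -
    have "real (2 ^ (i + 1)) = (2::real) powr real (i + 1)"
      by (subst powr_realpow) auto
    then have "real (2 ^ (i + 1)) powr k * 2 powr (- s * i) = 2 powr (real (i + 1) * k) * 2 powr (- s * i)"
      by (simp only: powr_powr)
    also have "\<dots> = 2 powr (k + (k - s) * i)"
      by (simp flip: powr_add) (simp add: algebra_simps)
    also have "\<dots> = 2 powr k * (2 powr (k - s)) ^ i"
      by (simp add: powr_add powr_powr flip: powr_realpow)
    finally show ?thesis by (simp add: mult.assoc)
  qed
  finally show ?thesis .
qed

lemma bounded_sums_word_length_powr:
  fixes S :: "'a::group_add set" and c k s :: real
  assumes "finite S" "generates S"
    and growth: "\<And>n::nat. 0 < n \<Longrightarrow> real (card (ball_cay S n)) < c * real n powr k"
    and "k < s" "0 < s"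
  shows "\<exists>K. \<forall>T. finite T \<longrightarrow> 0 \<notin> T \<longrightarrow> (\<Sum>g\<in>T. real (word_length S g) powr - s) \<le> K"
proof (intro exI allI impI)
  fix T :: "'a set" assume T: "finite T" "0 \<notin> T"
  define r :: real where "r = 2 powr (k - s)"
  have "0 < r" "r < 1"
    using \<open>k < s\<close> by (auto simp: r_def powr_less_one)
  have "real (card (ball_cay S 1)) < c"
    using growth [of 1] by simp
  then have "0 \<le> c"
    using of_nat_0_le_iff [of "card (ball_cay S 1)"] by linarith
  let ?j = "\<lambda>g. floor_log (word_length S g)"
  have "(\<Sum>g\<in>T. real (word_length S g) powr - s)
      = (\<Sum>i\<in>?j ` T. \<Sum>g\<in>{g\<in>T. ?j g = i}. real (word_length S g) powr - s)"
    by (rule sum.group [symmetric]) (use T(1) in auto)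
  also have "\<dots> \<le> (\<Sum>i\<in>?j ` T. c * 2 powr k * r ^ i)"
    unfolding r_def using assms(1,2) growth T \<open>0 < s\<close>
    by (intro sum_mono sum_word_length_powr_dyadic_shell_le) auto
  also have "\<dots> = c * 2 powr k * (\<Sum>i\<in>?j ` T. r ^ i)"
    by (simp add: sum_distrib_left)
  also have "\<dots> \<le> c * 2 powr k * (\<Sum>i. r ^ i)"
    using \<open>0 < r\<close> \<open>r < 1\<close> \<open>0 \<le> c\<close> T(1)
    by (intro mult_left_mono sum_le_suminf summable_geometric) auto
  finally show "(\<Sum>g\<in>T. real (word_length S g) powr - s) \<le> c * 2 powr k * (1 / (1 - r))"
    using \<open>0 < r\<close> \<open>r < 1\<close> by (simp add: suminf_geometric)
qed

lemma M_sb_le_powr_split: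
  assumes "\<mu> \<in> M_sb S s b" "0 \<le> b" "s' \<le> s" "0 < R" "R < word_length S g"
  shows "\<mu> g \<le> b * real R powr - (s - s') * real (word_length S g) powr - s'"
proof -
  have "g \<noteq> 0"
    using assms(5) by auto
  have "real (word_length S g) powr - (s - s') \<le> real R powr - (s - s')"
    using assms(3-5) by (intro powr_mono2') auto
  then have "b * (real (word_length S g) powr - (s - s') * real (word_length S g) powr - s')
      \<le> b * (real R powr - (s - s') * real (word_length S g) powr - s')"
    using \<open>0 \<le> b\<close> by (intro mult_left_mono mult_right_mono) auto
  moreover have "\<mu> g < b * (real (word_length S g) powr - (s - s') * real (word_length S g) powr - s')"
    using \<open>\<mu> \<in> M_sb S s b\<close> \<open>g \<noteq> 0\<close> by (simp add: M_sb_def flip: powr_add)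
  ultimately show ?thesis
    by (simp add: mult.assoc)
qed

lemma uniform_tail_bound:
  fixes S :: "'a::group_add set" and c k s b \<epsilon> :: real
  assumes "finite S" "generates S"
    and growth: "\<And>n::nat. 0 < n \<Longrightarrow> real (card (ball_cay S n)) < c * real n powr k"
    and "k < s" "0 < s" "0 \<le> b" "0 < \<epsilon>"
  shows "\<exists>R. \<forall>\<mu>\<in>M_sb S s b. \<forall>T. finite T \<longrightarrow> T \<inter> ball_cay S R = {} \<longrightarrow> sum \<mu> T \<le> \<epsilon>"
proof -
  define s' where "s' = (s + max k 0) / 2"
  have s': "k < s'" "0 < s'" "s' < s"
    using \<open>k < s\<close> \<open>0 < s\<close> by (auto simp: s'_def)
  obtain K where K: "\<And>T. finite T \<Longrightarrow> 0 \<notin> T \<Longrightarrow> (\<Sum>g\<in>T. real (word_length S g) powr - s') \<le> K"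
    using bounded_sums_word_length_powr [OF assms(1,2) growth s'(1,2)] by blast
  have "((\<lambda>R::nat. b * K * real R powr - (s - s')) \<longlongrightarrow> 0) sequentially"
    using s'(3) by (intro tendsto_mult_right_zero tendsto_neg_powr filterlim_real_sequentially) auto
  then have "\<forall>\<^sub>F R in sequentially. b * K * real R powr - (s - s') < \<epsilon> \<and> 1 \<le> R"
    using \<open>0 < \<epsilon>\<close> by (intro eventually_conj order_tendstoD(2) eventually_ge_at_top)
  then obtain R :: nat where R: "b * K * real R powr - (s - s') < \<epsilon>" "1 \<le> R"
    by (auto simp: eventually_sequentially)
  have "sum \<mu> T \<le> \<epsilon>" if "\<mu> \<in> M_sb S s b" "finite T" "T \<inter> ball_cay S R = {}" for \<mu> T
  proof -
    have "0 \<notin> T"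
      using that(3) by (auto simp: ball_cay_def)
    have "sum \<mu> T \<le> (\<Sum>g\<in>T. b * real R powr - (s - s') * real (word_length S g) powr - s')"
      using that \<open>0 \<le> b\<close> s'(3) R(2)
      by (intro sum_mono M_sb_le_powr_split) (auto simp: ball_cay_def)
    also have "\<dots> \<le> b * real R powr - (s - s') * K"
      using K [OF \<open>finite T\<close> \<open>0 \<notin> T\<close>] \<open>0 \<le> b\<close> by (simp add: mult_left_mono flip: sum_distrib_left)
    finally show ?thesis using R(1) by (simp add: mult_ac)
  qed
  then show ?thesis by blast
qed

lemma has_sum_le_sum_add_tail_bound:
  fixes f :: "'a \<Rightarrow> real"
  assumes "(f has_sum a) A" "finite B" "B \<subseteq> A"
    and tail: "\<And>T. finite T \<Longrightarrow> T \<subseteq> A - B \<Longrightarrow> sum f T \<le> \<epsilon>"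
  shows "a \<le> sum f B + \<epsilon>"
proof -
  have "f summable_on A - B"
    using assms(1) by (intro summable_on_cofin_subset assms(2)) (auto simp: summable_on_def)
  then have "(f has_sum (sum f B + infsum f (A - B))) (B \<union> (A - B))"
    by (intro has_sum_Un_disjoint has_sum_finite assms(2) has_sum_infsum) auto
  moreover have "B \<union> (A - B) = A"
    using assms(3) by auto
  ultimately have "a = sum f B + infsum f (A - B)"
    using assms(1) by (simp add: has_sum_unique)
  moreover have "infsum f (A - B) \<le> \<epsilon>"
    using \<open>f summable_on A - B\<close> tail by (rule infsum_le_finite_sums)
  ultimately show ?thesis by simp
qed

lemma M_sb_uniform_atom:
  fixes S :: "'a::group_add set" and c k s b :: real
  assumes "finite S" "generates S"
    and growth: "\<And>n::nat. 0 < n \<Longrightarrow> real (card (ball_cay S n)) < c * real n powr k"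
    and "k < s" "0 < s" "0 \<le> b"
  shows "\<exists>\<delta>>0. \<forall>\<mu>\<in>M_sb S s b. \<exists>g. \<delta> \<le> \<mu> g"
proof -
  obtain R where tail: "\<And>\<mu> T. \<mu> \<in> M_sb S s b \<Longrightarrow> finite T \<Longrightarrow> T \<inter> ball_cay S R = {} \<Longrightarrow> sum \<mu> T \<le> 1 / 2"
    using uniform_tail_bound [OF assms(1,2) growth assms(4-6), of "1 / 2"] by auto
  let ?B = "ball_cay S R"
  have "finite ?B"
    using assms(1,2) by (rule finite_ball_cay)
  moreover have "0 \<in> ?B"
    by (simp add: ball_cay_def)
  ultimately have "0 < card ?B"
    by (auto simp: card_gt_0_iff)
  define \<delta> where "\<delta> = 1 / (2 * real (card ?B))"
  have "\<exists>g. \<delta> \<le> \<mu> g" if "\<mu> \<in> M_sb S s b" for \<mu>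
  proof (rule ccontr)
    assume "\<nexists>g. \<delta> \<le> \<mu> g"
    then have "sum \<mu> ?B < card ?B * \<delta>"
      using \<open>0 < card ?B\<close> by (intro sum_bounded_above_strict) (auto simp: not_le)
    also have "\<dots> = 1 / 2"
      using \<open>0 < card ?B\<close> by (simp add: \<delta>_def)
    finally have "sum \<mu> ?B < 1 / 2" .
    moreover have "(\<mu> has_sum 1) UNIV"
      using that by (simp add: M_sb_def sym_prob_def)
    then have "1 \<le> sum \<mu> ?B + 1 / 2"
      using \<open>finite ?B\<close>
    proof (rule has_sum_le_sum_add_tail_bound)
      fix T assume "finite T" "T \<subseteq> UNIV - ?B"
      then show "sum \<mu> T \<le> 1 / 2" by (intro tail [OF that]) auto
    qed simp
    ultimately show False by simp
  qed
  moreover have "0 < \<delta>"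
    using \<open>0 < card ?B\<close> by (simp add: \<delta>_def)
  ultimately show ?thesis by blast
qed

lemma INF_lambda_c_M_sb_gt_1:
  fixes S :: "'a::group_add set" and c k s b :: real
  assumes "finite S" "generates S"
    and growth: "\<And>n::nat. 0 < n \<Longrightarrow> real (card (ball_cay S n)) < c * real n powr k"
    and "k < s" "0 < s" "0 \<le> b"
  shows "1 < (INF \<mu>\<in>M_sb S s b. lambda_c \<mu>)"
proof -
  obtain \<delta> where "0 < \<delta>" and atom: "\<And>\<mu>. \<mu> \<in> M_sb S s b \<Longrightarrow> \<exists>g. \<delta> \<le> \<mu> g"
    using M_sb_uniform_atom [OF assms] by auto
  have "ereal (1 + (\<delta> - 1 + exp (- \<delta>)) / 2) \<le> (INF \<mu>\<in>M_sb S s b. lambda_c \<mu>)"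
  proof (rule INF_greatest)
    fix \<mu> assume "\<mu> \<in> M_sb S s b"
    moreover obtain g where "\<delta> \<le> \<mu> g"
      using atom [OF \<open>\<mu> \<in> M_sb S s b\<close>] by blast
    ultimately show "ereal (1 + (\<delta> - 1 + exp (- \<delta>)) / 2) \<le> lambda_c \<mu>"
      using countable_UNIV_if_generates [OF assms(1,2)] \<open>0 < \<delta>\<close>
      by (intro lambda_c_ge_if_atom) (auto simp: M_sb_def)
  qed
  moreover have "1 < ereal (1 + (\<delta> - 1 + exp (- \<delta>)) / 2)"
    using exp_minus_greater [of \<delta>] \<open>0 < \<delta>\<close> by simp
  ultimately show ?thesis
    by (rule order.strict_trans2 [rotated])
qed

theorem proposition2:
  fixes S :: "'a::group_add set" and c k :: real
  assumes "finite S" and "generates S"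
    and "\<And>n::nat. 0 < n \<Longrightarrow> real (card (ball_cay S n)) < c * real n powr k"
  shows "pdim S \<le> ereal k"
  unfolding pdim_def
proof (rule Sup_least, clarify)
  fix s b :: real
  assume "0 < s" "0 < b" "(INF \<mu>\<in>M_sb S s b. lambda_c \<mu>) = 1"
  then show "ereal s \<le> ereal k"
    using INF_lambda_c_M_sb_gt_1 [OF assms, of s b] by (cases "k < s") auto
qed

end
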